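(* Let $p$ be an odd prime and let $G=F\rtimes H$ be a metabelian Frobenius group with Frobenius kernel $F\cong C_p\times C_p$ and cyclic Frobenius complement $H$ of order $m$ dividing $p-1$, such that $G$ has exactly $p+1$ conjugacy classes of subgroups of order $p$. Let $Q_1=\{1\}$, let $Q_2,\dots,Q_{p+2}$ be the $p+1$ subgroups of order $p$ of $F$, and $Q_{p+3}=F$. Then: (a) $N_G(Q_v)=G$ and $N_G(Q_v)/Q_v=G/Q_v$ for every $1\le v\le p+3$; (b) for every $1\le v\le p+2$, $G/Q_v$ is a Frobenius group with Frobenius complement $HQ_v/Q_v\cong H$ and Frobenius kernel $F/Q_v$.
   Context: A Frobenius group with complement $H$: $1\ne H<G$ with $H\cap gHg^{-1}=1$ for all $g\in G\setminus H$; its Frobenius kernel $F=\{1\}\cup(G\setminus\bigcup_g gHg^{-1})$ is a normal subgroup with $G=F\rtimes H$. *)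

theory Defs
  imports "HOL-Algebra.Algebra"
begin

definition conj_set :: "('a, 'b) monoid_scheme \<Rightarrow> 'a \<Rightarrow> 'a set \<Rightarrow> 'a set" where
  "conj_set G g H = g <#\<^bsub>G\<^esub> H #>\<^bsub>G\<^esub> inv\<^bsub>G\<^esub> g"

definition frobenius_complement :: "('a, 'b) monoid_scheme \<Rightarrow> 'a set \<Rightarrow> bool" where
  "frobenius_complement G H \<longleftrightarrow> group G \<and> subgroup H G \<and> H \<noteq> {\<one>\<^bsub>G\<^esub>} \<and> H \<noteq> carrier G \<and>
     (\<forall>g \<in> carrier G - H. H \<inter> conj_set G g H = {\<one>\<^bsub>G\<^esub>})"

definition frobenius_kernel :: "('a, 'b) monoid_scheme \<Rightarrow> 'a set \<Rightarrow> 'a set" where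
  "frobenius_kernel G H = {\<one>\<^bsub>G\<^esub>} \<union> (carrier G - (\<Union>g \<in> carrier G. conj_set G g H))"

definition metabelian :: "('a, 'b) monoid_scheme \<Rightarrow> bool" where
  "metabelian G \<longleftrightarrow> group G \<and> comm_group (G\<lparr>carrier := derived G (carrier G)\<rparr>)"

definition subgroup_classes_of_order :: "('a, 'b) monoid_scheme \<Rightarrow> nat \<Rightarrow> 'a set set set" where
  "subgroup_classes_of_order G n =
     {{conj_set G g Q | g. g \<in> carrier G} | Q. subgroup Q G \<and> card Q = n}"

end

(*
  Counting the pairs (g, x) with x \<noteq> 1 in g H g^-1 shows |F| |H| = |G| in every finite
  Frobenius group. Here |F| = p^2 is prime to |H|, so F is the Sylow p-subgroup: it consists
  of the solutions of x^(p^2) = 1 and is normal. The subgroups of order p lie in F and meet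
  pairwise trivially, so there are at most p + 1 of them; since they form p + 1 conjugacy
  classes, there are exactly p + 1, each is normal, and together they cover F.

  For N = 1 or N of order p, every f \<in> F - N lies in a normal subgroup R with R \<inter> N = 1
  (F itself, resp. the subgroup of order p through f). Write g = f h with f \<in> F, h \<in> H.
  An element of HN/N that is also conjugate by gN to an element of HN/N comes from some
  h' \<in> H whose commutator with f lies in N \<inter> R = 1; so f centralizes h', forcing h' = 1.
  The Frobenius kernel of G/N is then read off from the definition as F/N.
*)
theory Submission
  imports Defs
begin

section \<open>Conjugates of subsets and cosets\<close>

context group
begin

lemma inv_mult_cancel [simp]:
  "x \<in> carrier G \<Longrightarrow> y \<in> carrier G \<Longrightarrow> inv x \<otimes> (x \<otimes> y) = y"
  by (simp flip: m_assoc)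

lemma mult_inv_cancel [simp]:
  "x \<in> carrier G \<Longrightarrow> y \<in> carrier G \<Longrightarrow> x \<otimes> (inv x \<otimes> y) = y"
  by (simp flip: m_assoc)

lemma conj_set_eq_image:
  "g \<in> carrier G \<Longrightarrow> conj_set G g A = (\<lambda>a. g \<otimes> a \<otimes> inv g) ` A"
  unfolding conj_set_def l_coset_def r_coset_def by auto

lemma conj_set_one [simp]: "A \<subseteq> carrier G \<Longrightarrow> conj_set G \<one> A = A"
  by (auto simp: conj_set_eq_image subsetD)

lemma mem_conj_set_iff:
  assumes "g \<in> carrier G" "A \<subseteq> carrier G" "x \<in> carrier G"
  shows "x \<in> conj_set G g A \<longleftrightarrow> inv g \<otimes> x \<otimes> g \<in> A"
proof
  assume "x \<in> conj_set G g A"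
  then obtain a where "a \<in> A" "x = g \<otimes> a \<otimes> inv g"
    using assms(1) by (auto simp: conj_set_eq_image)
  then show "inv g \<otimes> x \<otimes> g \<in> A"
    using assms by (simp add: m_assoc subsetD)
next
  assume "inv g \<otimes> x \<otimes> g \<in> A"
  moreover have "x = g \<otimes> (inv g \<otimes> x \<otimes> g) \<otimes> inv g"
    using assms by (simp add: m_assoc)
  ultimately show "x \<in> conj_set G g A"
    using assms(1) by (auto simp: conj_set_eq_image)
qed

lemma card_conj_set:
  assumes "g \<in> carrier G" "A \<subseteq> carrier G"
  shows "card (conj_set G g A) = card A"
proof -
  have "inj_on (\<lambda>a. g \<otimes> a \<otimes> inv g) A"
    using assms by (auto simp: inj_on_def subsetD)
  then show ?thesis
    using assms by (simp add: conj_set_eq_image card_image)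
qed

lemma conj_set_conj_set:
  assumes "A \<subseteq> carrier G" "a \<in> carrier G" "g \<in> carrier G"
  shows "conj_set G a (conj_set G g A) = conj_set G (a \<otimes> g) A"
  using assms by (simp add: conj_set_eq_image image_image m_assoc inv_mult_group subsetD)

lemma subgroup_conj_set:
  assumes "subgroup A G" "g \<in> carrier G"
  shows "subgroup (conj_set G g A) G"
proof -
  have "(\<lambda>a. g \<otimes> a \<otimes> inv g) \<in> hom G G"
    using assms(2) by (intro homI) (simp_all add: m_assoc)
  then interpret conj: group_hom G G "\<lambda>a. g \<otimes> a \<otimes> inv g"
    by (simp add: group_hom_def group_hom_axioms_def is_group)
  show ?thesis
    using conj.subgroup_img_is_subgroup[OF assms(1)] assms(2) by (simp add: conj_set_eq_image)
qed

lemma conj_class_conj_set: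
  assumes "A \<subseteq> carrier G" "g \<in> carrier G"
  shows "{conj_set G a (conj_set G g A) | a. a \<in> carrier G} = {conj_set G a A | a. a \<in> carrier G}"
proof (intro equalityI subsetI)
  fix C assume "C \<in> {conj_set G a (conj_set G g A) | a. a \<in> carrier G}"
  then obtain a where a: "a \<in> carrier G" "C = conj_set G (a \<otimes> g) A"
    using conj_set_conj_set[OF assms(1) _ assms(2)] by auto
  moreover have "a \<otimes> g \<in> carrier G" using a assms(2) by simp
  ultimately show "C \<in> {conj_set G a A | a. a \<in> carrier G}" by blast
next
  fix C assume "C \<in> {conj_set G a A | a. a \<in> carrier G}"
  then obtain a where a: "a \<in> carrier G" "C = conj_set G a A" by auto
  then have "C = conj_set G (a \<otimes> inv g) (conj_set G g A)"
    using assms by (simp add: conj_set_conj_set m_assoc)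
  moreover have "a \<otimes> inv g \<in> carrier G" using a assms(2) by simp
  ultimately show "C \<in> {conj_set G a (conj_set G g A) | a. a \<in> carrier G}" by blast
qed

lemma normal_iff_conj_set_eq:
  assumes "subgroup N G"
  shows "N \<lhd> G \<longleftrightarrow> (\<forall>g \<in> carrier G. conj_set G g N = N)"
proof
  assume normal: "N \<lhd> G"
  have "conj_set G g N = N" if g: "g \<in> carrier G" for g
  proof
    show "conj_set G g N \<subseteq> N"
      using normal.inv_op_closed2[OF normal g] g by (auto simp: conj_set_eq_image)
    show "N \<subseteq> conj_set G g N"
    proof
      fix x assume x: "x \<in> N"
      then have "x \<in> carrier G" using subgroup.mem_carrier[OF assms] by blast
      then show "x \<in> conj_set G g N"
        using normal.inv_op_closed1[OF normal g x] g subgroup.subset[OF assms]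
        by (simp add: mem_conj_set_iff)
    qed
  qed
  then show "\<forall>g \<in> carrier G. conj_set G g N = N" by blast
next
  assume "\<forall>g \<in> carrier G. conj_set G g N = N"
  then show "N \<lhd> G"
    using assms by (auto simp: normal_inv_iff conj_set_eq_image)
qed

lemma normalizer_eq_carrier:
  assumes "N \<lhd> G"
  shows "normalizer G N = carrier G"
proof -
  have N: "subgroup N G" using normal_imp_subgroup[OF assms] .
  then have "conj_set G g N = N" if "g \<in> carrier G" for g
    using assms that normal_iff_conj_set_eq by blast
  then show ?thesis
    using subgroup.subset[OF N] by (auto simp: normalizer_def stabilizer_def conj_set_def)
qed

lemma conj_nat_pow:
  assumes "g \<in> carrier G" "x \<in> carrier G"
  shows "(g \<otimes> x \<otimes> inv g) [^] (n::nat) = g \<otimes> x [^] n \<otimes> inv g"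
proof (induction n)
  case 0
  then show ?case using assms by simp
next
  case (Suc n)
  then show ?case using assms by (simp add: m_assoc)
qed

lemma pow_card_subgroup_eq_one:
  assumes "subgroup A G" "finite A" "x \<in> A"
  shows "x [^] card A = \<one>"
proof -
  interpret A: group "G\<lparr>carrier := A\<rparr>"
    using subgroup.subgroup_is_group[OF assms(1) is_group] .
  have "x [^]\<^bsub>G\<lparr>carrier := A\<rparr>\<^esub> order (G\<lparr>carrier := A\<rparr>) = \<one>"
    using A.pow_order_eq_1 assms(3) by simp
  then show ?thesis by (simp add: order_def nat_pow_consistent[symmetric])
qed

lemma eq_one_if_coprime_pows:
  assumes "x \<in> carrier G" "x [^] (a::nat) = \<one>" "x [^] (b::nat) = \<one>" "coprime a b"
  shows "x = \<one>"
proof -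
  have "ord x dvd a" "ord x dvd b"
    using assms(1-3) pow_eq_id by blast+
  then have "ord x = 1"
    using assms(4) coprime_common_divisor_nat by blast
  then show ?thesis using assms(1) ord_eq_1 by simp
qed

lemma prime_order_subgroup_eq_generate:
  assumes "subgroup A G" "finite A" "Factorial_Ring.prime (card A)" "x \<in> A" "x \<noteq> \<one>"
  shows "A = generate G {x}"
proof -
  have x: "x \<in> carrier G" using subgroup.mem_carrier[OF assms(1,4)] .
  have "ord x dvd card A"
    using pow_eq_id[OF x, THEN iffD1] pow_card_subgroup_eq_one[OF assms(1,2,4)] .
  moreover have "ord x \<noteq> 1" using ord_eq_1[OF x] assms(5) by blast
  ultimately have "ord x = card A" using assms(3) prime_nat_iff by blast
  then have "card (generate G {x}) = card A" using generate_pow_card[OF x] by simp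
  moreover have "generate G {x} \<subseteq> A"
    using generate_subgroup_incl assms(1,4) by blast
  ultimately show ?thesis using assms(2) card_subset_eq by blast
qed

lemma prime_order_subgroups_eq:
  assumes "subgroup A G" "subgroup B G" "finite A" "finite B" "card A = p" "card B = p" "Factorial_Ring.prime p"
    and "x \<in> A" "x \<in> B" "x \<noteq> \<one>"
  shows "A = B"
  using prime_order_subgroup_eq_generate[OF assms(1,3) _ assms(8,10)]
    prime_order_subgroup_eq_generate[OF assms(2,4) _ assms(9,10)] assms(5-7)
  by simp

lemma card_l_coset:
  assumes "g \<in> carrier G" "A \<subseteq> carrier G"
  shows "card (g <# A) = card A"
proof -
  have "g <# A = (\<lambda>a. g \<otimes> a) ` A" unfolding l_coset_def by auto
  moreover have "inj_on (\<lambda>a. g \<otimes> a) A" using assms by (auto simp: inj_on_def subsetD)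
  ultimately show ?thesis by (simp add: card_image)
qed

lemma rcos_eq_iff:
  assumes "subgroup N G" "x \<in> carrier G" "y \<in> carrier G"
  shows "N #> x = N #> y \<longleftrightarrow> x \<otimes> inv y \<in> N"
proof
  assume "N #> x = N #> y"
  then have "N #> (x \<otimes> inv y) = N"
    using coset_mult_inv2 assms subgroup.subset by blast
  then show "x \<otimes> inv y \<in> N"
    using coset_join1 assms by simp
next
  assume "x \<otimes> inv y \<in> N"
  then have "N #> (x \<otimes> inv y) = N"
    using coset_join2 assms by simp
  then show "N #> x = N #> y"
    using coset_mult_inv1 assms subgroup.subset by blast
qed

lemma rcos_image_set_mult:
  assumes "N \<lhd> G" "A \<subseteq> carrier G"
  shows "(\<lambda>x. N #> x) ` (A <#> N) = (\<lambda>x. N #> x) ` A"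
proof -
  have N: "subgroup N G" using normal_imp_subgroup[OF assms(1)] .
  have "N #> (a \<otimes> n) = N #> a" if "a \<in> A" "n \<in> N" for a n
  proof -
    have a: "a \<in> carrier G" and n: "n \<in> carrier G"
      using that assms(2) subgroup.mem_carrier[OF N] by auto
    have "a \<otimes> n \<otimes> inv a \<in> N"
      using normal.inv_op_closed2[OF assms(1) a that(2)] .
    then show ?thesis using rcos_eq_iff[OF N] a n by simp
  qed
  moreover have "a \<in> A <#> N" if "a \<in> A" for a
  proof -
    have "a = a \<otimes> \<one>" using that assms(2) by auto
    then show ?thesis using that subgroup.one_closed[OF N] unfolding set_mult_def by blast
  qed
  ultimately show ?thesis
    unfolding set_mult_def by (auto intro: image_eqI)
qed

end

section \<open>Finite Frobenius groups\<close>

locale finite_frobenius = group G for G :: "('a, 'b) monoid_scheme" (structure) +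
  fixes H :: "'a set"
  assumes finite_carrier: "finite (carrier G)"
    and complement: "frobenius_complement G H"
begin

abbreviation F :: "'a set" where "F \<equiv> frobenius_kernel G H"

lemma complement_subgroup: "subgroup H G"
  using complement by (simp add: frobenius_complement_def)

lemma complement_subset: "H \<subseteq> carrier G"
  using subgroup.subset[OF complement_subgroup] .

lemma finite_complement: "finite H"
  using finite_subset[OF complement_subset finite_carrier] .

lemma complement_nontrivial: "H \<noteq> {\<one>}"
  using complement by (simp add: frobenius_complement_def)

lemma complement_inter_conj:
  "g \<in> carrier G \<Longrightarrow> g \<notin> H \<Longrightarrow> H \<inter> conj_set G g H = {\<one>}"
  using complement by (simp add: frobenius_complement_def)

lemma conj_complement_subset: "g \<in> carrier G \<Longrightarrow> conj_set G g H \<subseteq> carrier G"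
  using complement_subset by (auto simp: conj_set_eq_image)

lemma one_in_conj_complement: "g \<in> carrier G \<Longrightarrow> \<one> \<in> conj_set G g H"
  using subgroup_conj_set[OF complement_subgroup] subgroup.one_closed by blast

lemma inv_mult_mem_complement_if_conj_meet:
  assumes g: "g \<in> carrier G" "g' \<in> carrier G"
    and x: "x \<in> conj_set G g H" "x \<in> conj_set G g' H" "x \<noteq> \<one>"
  shows "inv g \<otimes> g' \<in> H"
proof (rule ccontr)
  assume notin: "inv g \<otimes> g' \<notin> H"
  have xG: "x \<in> carrier G" using conj_complement_subset g(1) x(1) by blast
  define y where "y = inv g \<otimes> x \<otimes> g"
  have yG: "y \<in> carrier G" unfolding y_def using g xG by simp
  have "y \<in> H"
    unfolding y_def using mem_conj_set_iff[OF g(1) complement_subset xG] x(1) by blast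
  moreover have "y \<in> conj_set G (inv g \<otimes> g') H"
  proof -
    have "inv (inv g \<otimes> g') \<otimes> y \<otimes> (inv g \<otimes> g') = inv g' \<otimes> x \<otimes> g'"
      unfolding y_def using g xG by (simp add: inv_mult_group m_assoc)
    also have "\<dots> \<in> H"
      using mem_conj_set_iff[OF g(2) complement_subset xG] x(2) by blast
    finally show ?thesis
      using mem_conj_set_iff[OF _ complement_subset yG, of "inv g \<otimes> g'"] g by simp
  qed
  ultimately have "y = \<one>"
    using complement_inter_conj[of "inv g \<otimes> g'"] notin g by blast
  moreover have "x = g \<otimes> y \<otimes> inv g"
    unfolding y_def using g xG by (simp add: m_assoc)
  ultimately have "x = \<one>" using g by simp
  with x(3) show False ..
qed

lemma kernel_subset: "F \<subseteq> carrier G"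
  unfolding frobenius_kernel_def by auto

lemma finite_kernel: "finite F"
  using finite_subset[OF kernel_subset finite_carrier] .

lemma one_in_kernel: "\<one> \<in> F"
  unfolding frobenius_kernel_def by simp

lemma kernel_conj_complement_eq_one:
  "x \<in> F \<Longrightarrow> g \<in> carrier G \<Longrightarrow> x \<in> conj_set G g H \<Longrightarrow> x = \<one>"
  unfolding frobenius_kernel_def by blast

lemma conj_complement_if_not_in_kernel:
  "x \<in> carrier G \<Longrightarrow> x \<notin> F \<Longrightarrow> \<exists>g \<in> carrier G. x \<in> conj_set G g H"
  unfolding frobenius_kernel_def by blast

lemma complement_inter_kernel: "H \<inter> F = {\<one>}"
proof -
  have "x = \<one>" if "x \<in> H" "x \<in> F" for x
    using kernel_conj_complement_eq_one[OF that(2) one_closed] that(1) complement_subset by simp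
  then show ?thesis
    using subgroup.one_closed[OF complement_subgroup] one_in_kernel by blast
qed

lemma mem_complement_if_commutes:
  assumes "h \<in> H" "h \<noteq> \<one>" "x \<in> carrier G" "x \<otimes> h = h \<otimes> x"
  shows "x \<in> H"
proof -
  have hG: "h \<in> carrier G" using assms(1) complement_subset by blast
  have "inv x \<otimes> h \<otimes> x = h"
    using assms(3,4) hG by (simp add: m_assoc flip: assms(4))
  then have "h \<in> conj_set G x H"
    using mem_conj_set_iff[OF assms(3) complement_subset hG] assms(1) by simp
  moreover have "h \<in> conj_set G \<one> H" using assms(1) complement_subset by simp
  ultimately show ?thesis
    using inv_mult_mem_complement_if_conj_meet[of \<one> x h] assms(2,3) by simp
qed

lemma conj_complement_fibre:
  assumes "x \<noteq> \<one>" "g\<^sub>0 \<in> carrier G" "x \<in> conj_set G g\<^sub>0 H"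
  shows "{g \<in> carrier G. x \<in> conj_set G g H} = g\<^sub>0 <# H"
proof (intro equalityI subsetI)
  fix g assume "g \<in> {g \<in> carrier G. x \<in> conj_set G g H}"
  then have g: "g \<in> carrier G" "x \<in> conj_set G g H" by auto
  then have "inv g\<^sub>0 \<otimes> g \<in> H" using inv_mult_mem_complement_if_conj_meet assms by blast
  moreover have "g = g\<^sub>0 \<otimes> (inv g\<^sub>0 \<otimes> g)" using g assms(2) by simp
  ultimately show "g \<in> g\<^sub>0 <# H" unfolding l_coset_def by blast
next
  fix g assume "g \<in> g\<^sub>0 <# H"
  then obtain c where c: "c \<in> H" "g = g\<^sub>0 \<otimes> c" unfolding l_coset_def by blast
  have cG: "c \<in> carrier G" and xG: "x \<in> carrier G"
    using c(1) complement_subset conj_complement_subset assms(2,3) by auto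
  have gG: "g \<in> carrier G" using c(2) cG assms(2) by simp
  have "inv g \<otimes> x \<otimes> g = inv c \<otimes> (inv g\<^sub>0 \<otimes> x \<otimes> g\<^sub>0) \<otimes> c"
    using c(2) cG assms(2) xG by (simp add: m_assoc inv_mult_group)
  also have "\<dots> \<in> H"
    using mem_conj_set_iff[OF assms(2) complement_subset xG] assms(3) c(1)
    by (simp add: subgroup.m_closed[OF complement_subgroup] subgroup.m_inv_closed[OF complement_subgroup])
  finally show "g \<in> {g \<in> carrier G. x \<in> conj_set G g H}"
    using mem_conj_set_iff[OF gG complement_subset xG] gG by simp
qed

lemma card_conj_complement_pairs:
  "card (SIGMA g:carrier G. conj_set G g H - {\<one>}) = order G * (card H - 1)"
proof -
  have "finite (conj_set G g H)" if "g \<in> carrier G" for g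
    using finite_subset[OF conj_complement_subset[OF that] finite_carrier] .
  then have "card (SIGMA g:carrier G. conj_set G g H - {\<one>}) = (\<Sum>g\<in>carrier G. card H - 1)"
    using finite_carrier
    by (simp add: card_SigmaI one_in_conj_complement card_conj_set[OF _ complement_subset])
  then show ?thesis by (simp add: order_def)
qed

lemma card_conj_complement_pairs_swap:
  "card (SIGMA x:carrier G - F. {g \<in> carrier G. x \<in> conj_set G g H}) = card (carrier G - F) * card H"
proof -
  have "card {g \<in> carrier G. x \<in> conj_set G g H} = card H" if x: "x \<in> carrier G - F" for x
  proof -
    obtain g where "g \<in> carrier G" "x \<in> conj_set G g H"
      using conj_complement_if_not_in_kernel x by blast
    moreover have "x \<noteq> \<one>" using x one_in_kernel by blast
    ultimately show ?thesis
      using conj_complement_fibre card_l_coset complement_subset by simp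
  qed
  then show ?thesis using finite_carrier by (simp add: card_SigmaI)
qed

lemma card_kernel_mult_card_complement: "card F * card H = order G"
proof -
  let ?P = "SIGMA g:carrier G. conj_set G g H - {\<one>}"
  let ?Q = "SIGMA x:carrier G - F. {g \<in> carrier G. x \<in> conj_set G g H}"
  have "?Q = (\<lambda>(g, x). (x, g)) ` ?P"
  proof (intro equalityI subsetI)
    fix q assume "q \<in> ?Q"
    then obtain x g where "q = (x, g)" "(g, x) \<in> ?P" using one_in_kernel by auto
    then show "q \<in> (\<lambda>(g, x). (x, g)) ` ?P" by force
  next
    fix q assume "q \<in> (\<lambda>(g, x). (x, g)) ` ?P"
    then show "q \<in> ?Q" using conj_complement_subset kernel_conj_complement_eq_one by auto
  qed
  moreover have "inj_on (\<lambda>(g, x). (x, g)) ?P" by (auto simp: inj_on_def)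
  ultimately have "card (carrier G - F) * card H = order G * (card H - 1)"
    using card_conj_complement_pairs card_conj_complement_pairs_swap by (simp add: card_image)
  moreover have "order G = card (carrier G - F) + card F"
    unfolding order_def using kernel_subset finite_carrier finite_kernel
    by (simp add: card_Diff_subset card_mono)
  moreover obtain k where "card H = Suc k"
    using finite_complement subgroup.one_closed[OF complement_subgroup]
    by (metis card_gt_0_iff empty_iff gr0_implies_Suc)
  ultimately show ?thesis by (simp add: algebra_simps)
qed

end

section \<open>Quotients by normal subgroups of the kernel\<close>

(* Frobenius' theorem makes this assumption redundant; it is verified directly below
   when |F| = p^2. *)
locale frobenius_normal_kernel = finite_frobenius +
  assumes kernel_normal: "frobenius_kernel G H \<lhd> G"
begin

lemma kernel_subgroup: "subgroup F G"
  using normal_imp_subgroup[OF kernel_normal] .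

lemma inj_on_kernel_mult_complement: "inj_on (\<lambda>(f, h). f \<otimes> h) (F \<times> H)"
proof (rule inj_onI, clarify)
  fix f h f' h' assume fh: "f \<in> F" "h \<in> H" "f' \<in> F" "h' \<in> H" "f \<otimes> h = f' \<otimes> h'"
  have G: "f \<in> carrier G" "h \<in> carrier G" "f' \<in> carrier G" "h' \<in> carrier G"
    using fh kernel_subset complement_subset by auto
  have "inv f' \<otimes> f = inv f' \<otimes> (f \<otimes> h) \<otimes> inv h"
    using G by (simp add: m_assoc)
  also have "\<dots> = h' \<otimes> inv h"
    unfolding fh(5) using G by (simp add: m_assoc)
  finally have "inv f' \<otimes> f = h' \<otimes> inv h" .
  moreover have "inv f' \<otimes> f \<in> F"
    using fh by (simp add: subgroup.m_closed[OF kernel_subgroup] subgroup.m_inv_closed[OF kernel_subgroup])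
  moreover have "h' \<otimes> inv h \<in> H"
    using fh by (simp add: subgroup.m_closed[OF complement_subgroup] subgroup.m_inv_closed[OF complement_subgroup])
  ultimately have "h' \<otimes> inv h \<in> H \<inter> F" by simp
  then have "h' \<otimes> inv h = \<one>" using complement_inter_kernel by simp
  moreover have "h' = h' \<otimes> inv h \<otimes> h" using G by (simp add: m_assoc)
  ultimately have "h' = h" using G by simp
  then show "f = f' \<and> h = h'" using fh(5) G by simp
qed

lemma kernel_complement_decomp:
  assumes "g \<in> carrier G"
  obtains f h where "f \<in> F" "h \<in> H" "g = f \<otimes> h"
proof -
  let ?mult = "\<lambda>(f, h). f \<otimes> h"
  have "card (?mult ` (F \<times> H)) = card (carrier G)"
    using inj_on_kernel_mult_complement card_kernel_mult_card_complement
    by (simp add: card_image card_cartesian_product order_def)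
  moreover have "?mult ` (F \<times> H) \<subseteq> carrier G"
    using kernel_subset complement_subset by auto
  ultimately have "?mult ` (F \<times> H) = carrier G"
    using finite_carrier by (simp add: card_subset_eq)
  then have "g \<in> ?mult ` (F \<times> H)" using assms by simp
  then obtain f h where "f \<in> F" "h \<in> H" "g = f \<otimes> h" by auto
  then show thesis by (rule that)
qed

lemma commutator_mem_kernel:
  assumes "f \<in> F" "k \<in> H"
  shows "f \<otimes> k \<otimes> inv f \<otimes> inv k \<in> F"
proof -
  have "k \<otimes> inv f \<otimes> inv k \<in> F"
    using normal.inv_op_closed2[OF kernel_normal] assms complement_subset
      subgroup.m_inv_closed[OF kernel_subgroup] by blast
  then have "f \<otimes> (k \<otimes> inv f \<otimes> inv k) \<in> F"
    using assms(1) subgroup.m_closed[OF kernel_subgroup] by blast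
  then show ?thesis
    using assms kernel_subset complement_subset by (simp add: m_assoc subsetD)
qed

context
  fixes N :: "'a set"
  assumes N_normal: "N \<lhd> G" and N_subset_kernel: "N \<subseteq> F"
begin

lemma N_subgroup: "subgroup N G"
  using normal_imp_subgroup[OF N_normal] .

lemma quotient_hom: "group_hom G (G Mod N) (\<lambda>x. N #> x)"
  using normal.factorgroup_is_group[OF N_normal] normal.r_coset_hom_Mod[OF N_normal]
  by (simp add: group_hom_def group_hom_axioms_def is_group)

lemma rcos_eq_one_iff: "x \<in> carrier G \<Longrightarrow> N #> x = N \<longleftrightarrow> x \<in> N"
  using rcos_eq_iff[OF N_subgroup, of x \<one>] subgroup.subset[OF N_subgroup] by simp

lemma conj_set_quotient:
  assumes "g \<in> carrier G"
  shows "conj_set (G Mod N) (N #> g) ((\<lambda>x. N #> x) ` H)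
    = (\<lambda>h. N #> (g \<otimes> h \<otimes> inv g)) ` H"
proof -
  interpret pr: group_hom G "G Mod N" "\<lambda>x. N #> x" by (rule quotient_hom)
  have "N #> g \<in> carrier (G Mod N)" using assms by (simp add: carrier_FactGroup)
  then have "conj_set (G Mod N) (N #> g) ((\<lambda>x. N #> x) ` H)
      = (\<lambda>h. (N #> g) \<otimes>\<^bsub>G Mod N\<^esub> (N #> h) \<otimes>\<^bsub>G Mod N\<^esub> inv\<^bsub>G Mod N\<^esub> (N #> g)) ` H"
    by (simp add: pr.H.conj_set_eq_image image_image)
  also have "\<dots> = (\<lambda>h. N #> (g \<otimes> h \<otimes> inv g)) ` H"
    using assms complement_subset by (intro image_cong) (auto simp: pr.hom_mult[symmetric] subsetD)
  finally show ?thesis .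
qed

lemma inj_on_rcos_complement: "inj_on (\<lambda>x. N #> x) H"
proof (rule inj_onI)
  fix x y assume xy: "x \<in> H" "y \<in> H" "N #> x = N #> y"
  have "x \<otimes> inv y \<in> N"
    using xy rcos_eq_iff[OF N_subgroup] complement_subset by blast
  moreover have "x \<otimes> inv y \<in> H"
    using xy by (simp add: subgroup.m_closed[OF complement_subgroup] subgroup.m_inv_closed[OF complement_subgroup])
  ultimately have "x \<otimes> inv y \<in> H \<inter> F" using N_subset_kernel by blast
  then have "x \<otimes> inv y = \<one>" using complement_inter_kernel by simp
  moreover have "x = x \<otimes> inv y \<otimes> y"
    using xy complement_subset by (simp add: m_assoc subsetD)
  ultimately show "x = y"
    using xy complement_subset by (simp add: subsetD)
qed

lemma quotient_complement_iso:
  "(G Mod N)\<lparr>carrier := (\<lambda>x. N #> x) ` H\<rparr> \<cong> G\<lparr>carrier := H\<rparr>"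
proof -
  interpret pr: group_hom G "G Mod N" "\<lambda>x. N #> x" by (rule quotient_hom)
  have "(\<lambda>x. N #> x) \<in> iso (G\<lparr>carrier := H\<rparr>) ((G Mod N)\<lparr>carrier := (\<lambda>x. N #> x) ` H\<rparr>)"
    using inj_on_rcos_complement complement_subset
    by (auto simp: iso_def hom_def bij_betw_def subsetD)
  then show ?thesis
    using is_isoI group.iso_sym[OF subgroup.subgroup_is_group[OF complement_subgroup is_group]]
    by blast
qed

lemma rcos_kernel_notin_quotient_conj_complement:
  assumes f: "f \<in> F" "f \<notin> N" and V: "V \<in> carrier (G Mod N)"
  shows "N #> f \<notin> conj_set (G Mod N) V ((\<lambda>x. N #> x) ` H)"
proof
  assume "N #> f \<in> conj_set (G Mod N) V ((\<lambda>x. N #> x) ` H)"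
  moreover obtain c where c: "c \<in> carrier G" "V = N #> c"
    using V by (auto simp: carrier_FactGroup)
  ultimately obtain h where h: "h \<in> H" "N #> f = N #> (c \<otimes> h \<otimes> inv c)"
    by (auto simp: conj_set_quotient)
  define y where "y = c \<otimes> h \<otimes> inv c"
  have fG: "f \<in> carrier G" using f(1) kernel_subset by blast
  have yG: "y \<in> carrier G" using c(1) h(1) complement_subset by (auto simp: y_def)
  have fy: "f \<otimes> inv y \<in> N"
    using rcos_eq_iff[OF N_subgroup fG yG] h(2) by (simp add: y_def)
  then have "inv (f \<otimes> inv y) \<otimes> f \<in> F"
    using N_subset_kernel f(1) subgroup.m_closed[OF kernel_subgroup]
      subgroup.m_inv_closed[OF kernel_subgroup] by blast
  then have "y \<in> F" using fG yG by (simp add: inv_mult_group m_assoc)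
  moreover have "y \<in> conj_set G c H"
    using c(1) h(1) by (auto simp: conj_set_eq_image y_def)
  ultimately have "y = \<one>" using kernel_conj_complement_eq_one c(1) by blast
  then show False using fy f(2) fG by simp
qed

lemma quotient_kernel:
  "frobenius_kernel (G Mod N) ((\<lambda>x. N #> x) ` H) = (\<lambda>x. N #> x) ` F"
proof (intro equalityI subsetI)
  fix U assume U: "U \<in> frobenius_kernel (G Mod N) ((\<lambda>x. N #> x) ` H)"
  show "U \<in> (\<lambda>x. N #> x) ` F"
  proof (cases "U = N")
    case True
    then show ?thesis
      using one_in_kernel subgroup.subset[OF N_subgroup] by (force intro: image_eqI[of _ _ \<one>])
  next
    case False
    obtain g where g: "g \<in> carrier G" "U = N #> g"
      using U False unfolding frobenius_kernel_def by (auto simp: carrier_FactGroup)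
    have "g \<in> F"
    proof (rule ccontr)
      assume "g \<notin> F"
      then obtain c where c: "c \<in> carrier G" "g \<in> conj_set G c H"
        using conj_complement_if_not_in_kernel g(1) by blast
      then have "U \<in> conj_set (G Mod N) (N #> c) ((\<lambda>x. N #> x) ` H)"
        using g(2) by (auto simp: conj_set_quotient conj_set_eq_image)
      moreover have "N #> c \<in> carrier (G Mod N)" using c(1) by (simp add: carrier_FactGroup)
      ultimately show False using U False unfolding frobenius_kernel_def by auto
    qed
    then show ?thesis using g(2) by blast
  qed
next
  fix U assume "U \<in> (\<lambda>x. N #> x) ` F"
  then obtain f where f: "f \<in> F" "U = N #> f" by blast
  have fG: "f \<in> carrier G" using f(1) kernel_subset by blast
  show "U \<in> frobenius_kernel (G Mod N) ((\<lambda>x. N #> x) ` H)"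
  proof (cases "f \<in> N")
    case True
    then show ?thesis using f(2) fG rcos_eq_one_iff unfolding frobenius_kernel_def by simp
  next
    case False
    then show ?thesis
      using rcos_kernel_notin_quotient_conj_complement[OF f(1) False] f(2) fG
      unfolding frobenius_kernel_def by (auto simp: carrier_FactGroup)
  qed
qed

lemma complement_eq_if_conj_mod:
  assumes "f \<in> F" "k \<in> H" "h \<in> H" "f \<otimes> k \<otimes> inv f \<otimes> inv h \<in> N"
  shows "k = h"
proof -
  have G: "f \<in> carrier G" "k \<in> carrier G" "h \<in> carrier G"
    using assms kernel_subset complement_subset by auto
  have "k \<otimes> inv h = inv (f \<otimes> k \<otimes> inv f \<otimes> inv k) \<otimes> (f \<otimes> k \<otimes> inv f \<otimes> inv h)"
    using G by (simp add: inv_mult_group m_assoc)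
  also have "\<dots> \<in> F"
    using commutator_mem_kernel[OF assms(1,2)] assms(4) N_subset_kernel
      subgroup.m_closed[OF kernel_subgroup] subgroup.m_inv_closed[OF kernel_subgroup] by blast
  finally have "k \<otimes> inv h \<in> H \<inter> F"
    using assms(2,3) subgroup.m_closed[OF complement_subgroup]
      subgroup.m_inv_closed[OF complement_subgroup] by blast
  then have "k \<otimes> inv h = \<one>" using complement_inter_kernel by simp
  moreover have "k = k \<otimes> inv h \<otimes> h" using G by (simp add: m_assoc)
  ultimately show ?thesis using G by simp
qed

lemma complement_eq_one_if_commutator_mem:
  assumes "f \<in> F" "f \<notin> N" "h \<in> H" "f \<otimes> h \<otimes> inv f \<otimes> inv h \<in> N"
    and "R \<lhd> G" "f \<in> R" "R \<inter> N = {\<one>}"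
  shows "h = \<one>"
proof (rule ccontr)
  assume "h \<noteq> \<one>"
  have fG: "f \<in> carrier G" and hG: "h \<in> carrier G"
    using assms(1,3) kernel_subset complement_subset by auto
  have "h \<otimes> inv f \<otimes> inv h \<in> R"
    using normal.inv_op_closed2[OF assms(5) hG] assms(6)
      subgroup.m_inv_closed[OF normal_imp_subgroup[OF assms(5)]] by blast
  then have "f \<otimes> (h \<otimes> inv f \<otimes> inv h) \<in> R"
    using assms(6) subgroup.m_closed[OF normal_imp_subgroup[OF assms(5)]] by blast
  then have "f \<otimes> h \<otimes> inv f \<otimes> inv h \<in> R \<inter> N"
    using assms(4) fG hG by (simp add: m_assoc)
  then have "f \<otimes> h \<otimes> inv f \<otimes> inv h = \<one>" using assms(7) by simp
  moreover have "f \<otimes> h = f \<otimes> h \<otimes> inv f \<otimes> inv h \<otimes> h \<otimes> f"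
    using fG hG by (simp add: m_assoc)
  ultimately have "f \<otimes> h = h \<otimes> f" using fG hG by simp
  then have "f \<in> H \<inter> F"
    using mem_complement_if_commutes[OF assms(3) \<open>h \<noteq> \<one>\<close> fG] assms(1) by simp
  then have "f = \<one>" using complement_inter_kernel by simp
  then show False using assms(2) subgroup.one_closed[OF N_subgroup] by simp
qed

lemma complement_eq_one_if_rcos_conj:
  assumes separating: "\<And>f. f \<in> F \<Longrightarrow> f \<notin> N \<Longrightarrow> \<exists>R. R \<lhd> G \<and> f \<in> R \<and> R \<inter> N = {\<one>}"
    and g: "g \<in> carrier G" "N #> g \<notin> (\<lambda>x. N #> x) ` H"
    and h: "h\<^sub>1 \<in> H" "h\<^sub>2 \<in> H" "N #> h\<^sub>1 = N #> (g \<otimes> h\<^sub>2 \<otimes> inv g)"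
  shows "h\<^sub>1 = \<one>"
proof -
  obtain f h\<^sub>0 where fh\<^sub>0: "f \<in> F" "h\<^sub>0 \<in> H" "g = f \<otimes> h\<^sub>0"
    using kernel_complement_decomp g(1) by blast
  define k where "k = h\<^sub>0 \<otimes> h\<^sub>2 \<otimes> inv h\<^sub>0"
  have k: "k \<in> H"
    unfolding k_def using fh\<^sub>0(2) h(2) subgroup.m_closed[OF complement_subgroup]
      subgroup.m_inv_closed[OF complement_subgroup] by blast
  have G: "f \<in> carrier G" "h\<^sub>0 \<in> carrier G" "h\<^sub>1 \<in> carrier G" "h\<^sub>2 \<in> carrier G" "k \<in> carrier G"
    using fh\<^sub>0 h(1,2) k kernel_subset complement_subset by auto
  have "f \<notin> N"
  proof
    assume "f \<in> N"
    then have "N #> g = N #> h\<^sub>0"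
      using fh\<^sub>0(3) G rcos_eq_iff[OF N_subgroup] by (simp add: m_assoc)
    then show False using g(2) fh\<^sub>0(2) by blast
  qed
  then obtain R where R: "R \<lhd> G" "f \<in> R" "R \<inter> N = {\<one>}"
    using separating fh\<^sub>0(1) by blast
  have "g \<otimes> h\<^sub>2 \<otimes> inv g = f \<otimes> k \<otimes> inv f"
    using G fh\<^sub>0(3) by (simp add: k_def m_assoc inv_mult_group)
  then have "f \<otimes> k \<otimes> inv f \<otimes> inv h\<^sub>1 \<in> N"
    using h(3) rcos_eq_iff[OF N_subgroup, of "f \<otimes> k \<otimes> inv f" h\<^sub>1] G by simp
  moreover from this have "k = h\<^sub>1"
    using complement_eq_if_conj_mod fh\<^sub>0(1) k h(1) by blast
  ultimately show "h\<^sub>1 = \<one>"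
    using complement_eq_one_if_commutator_mem[OF fh\<^sub>0(1) \<open>f \<notin> N\<close> h(1) _ R] by simp
qed

lemma quotient_complement_inter_conj:
  assumes separating: "\<And>f. f \<in> F \<Longrightarrow> f \<notin> N \<Longrightarrow> \<exists>R. R \<lhd> G \<and> f \<in> R \<and> R \<inter> N = {\<one>}"
    and U: "U \<in> carrier (G Mod N)" "U \<notin> (\<lambda>x. N #> x) ` H"
  shows "(\<lambda>x. N #> x) ` H \<inter> conj_set (G Mod N) U ((\<lambda>x. N #> x) ` H) = {\<one>\<^bsub>G Mod N\<^esub>}"
proof
  obtain g where g: "g \<in> carrier G" "U = N #> g"
    using U(1) by (auto simp: carrier_FactGroup)
  show "(\<lambda>x. N #> x) ` H \<inter> conj_set (G Mod N) U ((\<lambda>x. N #> x) ` H) \<subseteq> {\<one>\<^bsub>G Mod N\<^esub>}"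
  proof
    fix V assume "V \<in> (\<lambda>x. N #> x) ` H \<inter> conj_set (G Mod N) U ((\<lambda>x. N #> x) ` H)"
    then obtain h\<^sub>1 h\<^sub>2 where h: "h\<^sub>1 \<in> H" "h\<^sub>2 \<in> H" "V = N #> h\<^sub>1" "V = N #> (g \<otimes> h\<^sub>2 \<otimes> inv g)"
      using g by (auto simp: conj_set_quotient)
    then have "h\<^sub>1 = \<one>"
      using complement_eq_one_if_rcos_conj[OF separating g(1)] U(2) g(2) by simp
    then show "V \<in> {\<one>\<^bsub>G Mod N\<^esub>}"
      using h(3) subgroup.subset[OF N_subgroup] by simp
  qed
  have one: "\<one> \<in> H" using subgroup.one_closed[OF complement_subgroup] .
  have "N #> (g \<otimes> \<one> \<otimes> inv g) = N" "N #> \<one> = N"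
    using g(1) subgroup.subset[OF N_subgroup] by simp_all
  then have "N \<in> (\<lambda>h. N #> (g \<otimes> h \<otimes> inv g)) ` H" "N \<in> (\<lambda>x. N #> x) ` H"
    using one by (metis image_eqI)+
  then show "{\<one>\<^bsub>G Mod N\<^esub>} \<subseteq> (\<lambda>x. N #> x) ` H \<inter> conj_set (G Mod N) U ((\<lambda>x. N #> x) ` H)"
    using g by (simp add: conj_set_quotient)
qed

lemma quotient_complement:
  assumes "N \<noteq> F"
    and separating: "\<And>f. f \<in> F \<Longrightarrow> f \<notin> N \<Longrightarrow> \<exists>R. R \<lhd> G \<and> f \<in> R \<and> R \<inter> N = {\<one>}"
  shows "frobenius_complement (G Mod N) ((\<lambda>x. N #> x) ` H)"
  unfolding frobenius_complement_def
proof (intro conjI ballI)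
  interpret pr: group_hom G "G Mod N" "\<lambda>x. N #> x" by (rule quotient_hom)
  show "group (G Mod N)" by (rule pr.H.is_group)
  show "subgroup ((\<lambda>x. N #> x) ` H) (G Mod N)"
    using pr.subgroup_img_is_subgroup[OF complement_subgroup] .
  obtain h where h: "h \<in> H" "h \<noteq> \<one>"
    using complement_nontrivial subgroup.one_closed[OF complement_subgroup] by blast
  then have "h \<notin> N" using N_subset_kernel complement_inter_kernel by blast
  then have "N #> h \<noteq> N" using h(1) complement_subset rcos_eq_one_iff by blast
  then show "(\<lambda>x. N #> x) ` H \<noteq> {\<one>\<^bsub>G Mod N\<^esub>}" using h(1) by auto
  obtain f where f: "f \<in> F" "f \<notin> N" using assms(1) N_subset_kernel by blast
  then have "N #> f \<in> carrier (G Mod N)"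
    using kernel_subset by (auto simp: carrier_FactGroup)
  moreover have "(\<lambda>x. N #> x) ` H \<subseteq> carrier (G Mod N)"
    using complement_subset by (auto simp: carrier_FactGroup)
  then have "conj_set (G Mod N) \<one>\<^bsub>G Mod N\<^esub> ((\<lambda>x. N #> x) ` H) = (\<lambda>x. N #> x) ` H"
    by (rule pr.H.conj_set_one)
  ultimately show "(\<lambda>x. N #> x) ` H \<noteq> carrier (G Mod N)"
    using rcos_kernel_notin_quotient_conj_complement[OF f pr.H.one_closed] by auto
next
  fix U assume "U \<in> carrier (G Mod N) - (\<lambda>x. N #> x) ` H"
  then show "(\<lambda>x. N #> x) ` H \<inter> conj_set (G Mod N) U ((\<lambda>x. N #> x) ` H) = {\<one>\<^bsub>G Mod N\<^esub>}"
    using quotient_complement_inter_conj separating by blast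
qed

end

end

section \<open>Frobenius kernels of order p^2\<close>

locale frobenius_kernel_order_p2 = finite_frobenius +
  fixes p :: nat
  assumes prime_p: "Factorial_Ring.prime p"
    and card_kernel: "card (frobenius_kernel G H) = p * p"
    and coprime_complement: "coprime p (card H)"
    and card_subgroup_classes: "card (subgroup_classes_of_order G p) = p + 1"
begin

lemma pow_p2_eq_one_imp_in_kernel:
  assumes x: "x \<in> carrier G" "x [^] (p * p) = \<one>"
  shows "x \<in> F"
proof (rule ccontr)
  assume "x \<notin> F"
  then obtain g where g: "g \<in> carrier G" "x \<in> conj_set G g H"
    using conj_complement_if_not_in_kernel x(1) by blast
  then obtain h where gh: "g \<in> carrier G" "h \<in> H" "x = g \<otimes> h \<otimes> inv g"
    by (auto simp: conj_set_eq_image)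
  have "h [^] card H = \<one>"
    using pow_card_subgroup_eq_one[OF complement_subgroup finite_complement gh(2)] .
  then have "x [^] card H = \<one>"
    using gh complement_subset by (simp add: conj_nat_pow subsetD)
  then have "x = \<one>"
    using eq_one_if_coprime_pows[OF x] coprime_complement by simp
  with \<open>x \<notin> F\<close> one_in_kernel show False by simp
qed

lemma sylow_subgroup_eq_kernel:
  assumes "subgroup P G" "card P = p * p"
  shows "P = F"
proof -
  have finite_P: "finite P"
    using finite_subset[OF subgroup.subset[OF assms(1)] finite_carrier] .
  have "P \<subseteq> F"
  proof
    fix x assume "x \<in> P"
    then show "x \<in> F"
      using pow_p2_eq_one_imp_in_kernel subgroup.mem_carrier[OF assms(1)]
        pow_card_subgroup_eq_one[OF assms(1) finite_P] assms(2)
      by simp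
  qed
  moreover have "finite F" using finite_kernel .
  ultimately show ?thesis using assms(2) card_kernel by (simp add: card_subset_eq)
qed

end

sublocale frobenius_kernel_order_p2 \<subseteq> frobenius_normal_kernel
proof (intro frobenius_normal_kernel.intro frobenius_normal_kernel_axioms.intro)
  show "finite_frobenius G H" by (rule finite_frobenius_axioms)
  have "order G = p ^ 2 * card H"
    using card_kernel_mult_card_complement card_kernel by (simp add: power2_eq_square)
  then obtain P where "subgroup P G" "card P = p ^ 2"
    using sylow_thm[OF prime_p is_group _ finite_carrier] by blast
  then have kernel_subgroup: "subgroup F G"
    using sylow_subgroup_eq_kernel by (simp add: power2_eq_square)
  have "x \<otimes> f \<otimes> inv x \<in> F" if "x \<in> carrier G" "f \<in> F" for x f
  proof -
    have f: "f \<in> carrier G" using that(2) kernel_subset by blast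
    have "f [^] (p * p) = \<one>"
      using pow_card_subgroup_eq_one[OF kernel_subgroup _ that(2)] card_kernel
        finite_kernel by simp
    then show ?thesis
      using pow_p2_eq_one_imp_in_kernel that(1) f by (simp add: conj_nat_pow)
  qed
  then show "frobenius_kernel G H \<lhd> G" using kernel_subgroup by (simp add: normal_inv_iff)
qed

context frobenius_kernel_order_p2
begin

abbreviation order_p_subgroups :: "'a set set" where
  "order_p_subgroups \<equiv> {Q. subgroup Q G \<and> card Q = p}"

lemma finite_order_p_subgroup: "Q \<in> order_p_subgroups \<Longrightarrow> finite Q"
  using finite_subset[OF subgroup.subset finite_carrier] by blast

lemma order_p_subgroup_subset_kernel:
  assumes "Q \<in> order_p_subgroups"
  shows "Q \<subseteq> F"
proof
  fix x assume x: "x \<in> Q"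
  have Q: "subgroup Q G" "card Q = p" using assms by auto
  have xG: "x \<in> carrier G" using subgroup.mem_carrier[OF Q(1) x] .
  have "x [^] p = \<one>"
    using pow_card_subgroup_eq_one[OF Q(1) finite_order_p_subgroup[OF assms] x] Q(2) by simp
  then have "x [^] (p * p) = \<one>" using nat_pow_pow[OF xG, of p p] by simp
  then show "x \<in> F" using pow_p2_eq_one_imp_in_kernel xG by blast
qed

lemma finite_order_p_subgroups: "finite order_p_subgroups"
proof -
  have "order_p_subgroups \<subseteq> Pow (carrier G)" using subgroup.subset by blast
  then show ?thesis using finite_carrier finite_subset by blast
qed

lemma order_p_subgroups_eq:
  assumes "Q \<in> order_p_subgroups" "R \<in> order_p_subgroups" "x \<in> Q" "x \<in> R" "x \<noteq> \<one>"
  shows "Q = R"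
  using prime_order_subgroups_eq[of Q R] finite_order_p_subgroup assms prime_p by blast

lemma card_Union_order_p_subgroups:
  "card (\<Union>Q \<in> order_p_subgroups. Q - {\<one>}) = card order_p_subgroups * (p - 1)"
proof -
  have "card (\<Union>Q \<in> order_p_subgroups. Q - {\<one>}) = (\<Sum>Q \<in> order_p_subgroups. card (Q - {\<one>}))"
  proof (rule card_UN_disjoint[OF finite_order_p_subgroups])
    show "\<forall>Q \<in> order_p_subgroups. finite (Q - {\<one>})"
      using finite_order_p_subgroup by blast
    show "\<forall>Q \<in> order_p_subgroups. \<forall>R \<in> order_p_subgroups. Q \<noteq> R \<longrightarrow> (Q - {\<one>}) \<inter> (R - {\<one>}) = {}"
    proof (intro ballI impI equals0I)
      fix Q R x assume "Q \<in> order_p_subgroups" "R \<in> order_p_subgroups" "Q \<noteq> R"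
        and "x \<in> (Q - {\<one>}) \<inter> (R - {\<one>})"
      then show False using order_p_subgroups_eq[of Q R x] by simp
    qed
  qed
  also have "\<dots> = (\<Sum>Q \<in> order_p_subgroups. p - 1)"
  proof (rule sum.cong[OF refl])
    fix Q assume Q: "Q \<in> order_p_subgroups"
    then have "subgroup Q G" by simp
    then have "\<one> \<in> Q" by (rule subgroup.one_closed)
    then show "card (Q - {\<one>}) = p - 1"
      using Q finite_order_p_subgroup[OF Q] by simp
  qed
  finally show ?thesis by simp
qed

lemma card_kernel_minus_one: "card (F - {\<one>}) = (p + 1) * (p - 1)"
  using card_kernel one_in_kernel finite_kernel
    prime_gt_1_nat[OF prime_p]
  by (simp add: algebra_simps)

lemma subgroup_classes_eq_image:
  "subgroup_classes_of_order G p
    = (\<lambda>Q. {conj_set G g Q | g. g \<in> carrier G}) ` order_p_subgroups"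
  unfolding subgroup_classes_of_order_def by auto

lemma card_order_p_subgroups: "card order_p_subgroups = p + 1"
proof -
  have "(\<Union>Q \<in> order_p_subgroups. Q - {\<one>}) \<subseteq> F - {\<one>}"
    using order_p_subgroup_subset_kernel by blast
  then have "card (\<Union>Q \<in> order_p_subgroups. Q - {\<one>}) \<le> card (F - {\<one>})"
    using finite_kernel by (intro card_mono) simp_all
  then have "card order_p_subgroups * (p - 1) \<le> (p + 1) * (p - 1)"
    using card_Union_order_p_subgroups card_kernel_minus_one by simp
  moreover have "0 < p - 1" using prime_gt_1_nat[OF prime_p] by simp
  ultimately have "card order_p_subgroups \<le> p + 1" by (rule mult_right_le_imp_le)
  moreover have "p + 1 \<le> card order_p_subgroups"
    using card_subgroup_classes subgroup_classes_eq_image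
      card_image_le[OF finite_order_p_subgroups, of "\<lambda>Q. {conj_set G g Q | g. g \<in> carrier G}"]
    by simp
  ultimately show ?thesis by simp
qed

lemma Union_order_p_subgroups: "(\<Union>Q \<in> order_p_subgroups. Q - {\<one>}) = F - {\<one>}"
proof (rule card_subset_eq)
  show "finite (F - {\<one>})" using finite_kernel by simp
  show "(\<Union>Q \<in> order_p_subgroups. Q - {\<one>}) \<subseteq> F - {\<one>}"
    using order_p_subgroup_subset_kernel by blast
  show "card (\<Union>Q \<in> order_p_subgroups. Q - {\<one>}) = card (F - {\<one>})"
    using card_Union_order_p_subgroups card_order_p_subgroups card_kernel_minus_one by simp
qed

lemma order_p_subgroup_normal:
  assumes Q: "Q \<in> order_p_subgroups"
  shows "Q \<lhd> G"
proof -
  let ?class = "\<lambda>Q. {conj_set G g Q | g. g \<in> carrier G}"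
  have inj: "inj_on ?class order_p_subgroups"
    using card_subgroup_classes card_order_p_subgroups subgroup_classes_eq_image
      finite_order_p_subgroups by (simp add: eq_card_imp_inj_on)
  have QG: "subgroup Q G" "Q \<subseteq> carrier G" using Q subgroup.subset by auto
  have "conj_set G g Q = Q" if g: "g \<in> carrier G" for g
  proof -
    have "conj_set G g Q \<in> order_p_subgroups"
      using subgroup_conj_set[OF QG(1) g] card_conj_set[OF g QG(2)] Q by simp
    moreover have "?class (conj_set G g Q) = ?class Q"
      using conj_class_conj_set[OF QG(2) g] .
    ultimately show ?thesis using inj_onD[OF inj] Q by blast
  qed
  then show ?thesis using normal_iff_conj_set_eq[OF QG(1)] by blast
qed

lemma order_p_subgroup_separates:
  assumes N: "N \<in> order_p_subgroups" and f: "f \<in> F" "f \<notin> N"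
  shows "\<exists>R. R \<lhd> G \<and> f \<in> R \<and> R \<inter> N = {\<one>}"
proof -
  have "f \<noteq> \<one>" using f(2) N subgroup.one_closed by blast
  then obtain R where R: "R \<in> order_p_subgroups" "f \<in> R"
    using Union_order_p_subgroups f(1) by blast
  have "R \<inter> N = {\<one>}"
    using order_p_subgroups_eq[OF R(1) N] R(2) f(2) subgroup.one_closed R(1) N by blast
  then show ?thesis using order_p_subgroup_normal[OF R(1)] R(2) by blast
qed

lemma quotient_frobenius:
  assumes N: "N = {\<one>} \<or> N \<in> order_p_subgroups"
  shows "frobenius_complement (G Mod N) ((\<lambda>x. N #> x) ` H)"
    and "(G Mod N)\<lparr>carrier := (\<lambda>x. N #> x) ` H\<rparr> \<cong> G\<lparr>carrier := H\<rparr>"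
    and "frobenius_kernel (G Mod N) ((\<lambda>x. N #> x) ` H) = (\<lambda>x. N #> x) ` F"
proof -
  have p: "p > 1" using prime_gt_1_nat[OF prime_p] .
  have normal: "N \<lhd> G" and subset: "N \<subseteq> F" and "card N \<le> p"
    using N one_is_normal one_in_kernel p order_p_subgroup_normal order_p_subgroup_subset_kernel
    by auto
  then have "N \<noteq> F" using card_kernel p by auto
  moreover have "\<exists>R. R \<lhd> G \<and> f \<in> R \<and> R \<inter> N = {\<one>}" if f: "f \<in> F" "f \<notin> N" for f
  proof (cases "N = {\<one>}")
    case True
    then show ?thesis using kernel_normal f(1) one_in_kernel by blast
  next
    case False
    then show ?thesis using N order_p_subgroup_separates f by blast
  qed
  ultimately show "frobenius_complement (G Mod N) ((\<lambda>x. N #> x) ` H)"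
    using quotient_complement[OF normal subset] by blast
  show "(G Mod N)\<lparr>carrier := (\<lambda>x. N #> x) ` H\<rparr> \<cong> G\<lparr>carrier := H\<rparr>"
    using quotient_complement_iso[OF normal subset] .
  show "frobenius_kernel (G Mod N) ((\<lambda>x. N #> x) ` H) = (\<lambda>x. N #> x) ` F"
    using quotient_kernel[OF normal subset] .
qed

end

lemma coprime_if_dvd_prime_minus_one:
  fixes p m :: nat
  assumes "Factorial_Ring.prime p" "m dvd p - 1"
  shows "coprime p m"
proof -
  have p: "p > 1" using prime_gt_1_nat[OF assms(1)] .
  have "m \<noteq> 0"
  proof
    assume "m = 0"
    with assms(2) p show False by simp
  qed
  moreover have "m \<le> p - 1" using assms(2) p by (simp add: dvd_imp_le)
  ultimately show ?thesis using assms(1) p by (simp add: prime_imp_coprime_nat nat_dvd_not_less)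
qed

theorem lemma5p2:
  fixes G :: "('a, 'b) monoid_scheme" and H :: "'a set" and p m :: nat
  assumes "Factorial_Ring.prime p" and "odd p"
    and "group G" and "finite (carrier G)"
    and "frobenius_complement G H"
    and "metabelian G"
    and "G\<lparr>carrier := frobenius_kernel G H\<rparr> \<cong> integer_mod_group p \<times>\<times> integer_mod_group p"
    and "cyclic_group (G\<lparr>carrier := H\<rparr>)" and "card H = m" and "m dvd p - 1"
    and "card (subgroup_classes_of_order G p) = p + 1"
  shows "(\<forall>Q. (Q = {\<one>\<^bsub>G\<^esub>} \<or> Q = frobenius_kernel G H \<or>
              (subgroup Q G \<and> Q \<subseteq> frobenius_kernel G H \<and> card Q = p)) \<longrightarrow>
            normalizer G Q = carrier G \<and>
            G\<lparr>carrier := normalizer G Q\<rparr> Mod Q = G Mod Q) \<and>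
         (\<forall>Q. (Q = {\<one>\<^bsub>G\<^esub>} \<or> (subgroup Q G \<and> Q \<subseteq> frobenius_kernel G H \<and> card Q = p)) \<longrightarrow>
            frobenius_complement (G Mod Q) ((\<lambda>x. Q #>\<^bsub>G\<^esub> x) ` (H <#>\<^bsub>G\<^esub> Q)) \<and>
            (G Mod Q)\<lparr>carrier := (\<lambda>x. Q #>\<^bsub>G\<^esub> x) ` (H <#>\<^bsub>G\<^esub> Q)\<rparr> \<cong> G\<lparr>carrier := H\<rparr> \<and>
            frobenius_kernel (G Mod Q) ((\<lambda>x. Q #>\<^bsub>G\<^esub> x) ` (H <#>\<^bsub>G\<^esub> Q))
              = (\<lambda>x. Q #>\<^bsub>G\<^esub> x) ` frobenius_kernel G H)"
proof -
  have "card (frobenius_kernel G H) = p * p"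
    using iso_same_card[OF assms(7)] prime_gt_1_nat[OF assms(1)]
    by (simp add: carrier_integer_mod_group card_cartesian_product)
  moreover have "coprime p (card H)"
    using coprime_if_dvd_prime_minus_one[OF assms(1)] assms(9,10) by simp
  ultimately interpret frobenius_kernel_order_p2 G H p
    using assms
    by (intro frobenius_kernel_order_p2.intro frobenius_kernel_order_p2_axioms.intro
        finite_frobenius.intro finite_frobenius_axioms.intro) simp_all
  have normal: "Q \<lhd> G"
    if "Q = {\<one>\<^bsub>G\<^esub>} \<or> Q = frobenius_kernel G H \<or> (subgroup Q G \<and> card Q = p)" for Q
    using that one_is_normal kernel_normal order_p_subgroup_normal by auto
  show ?thesis
    using normal normalizer_eq_carrier quotient_frobenius rcos_image_set_mult complement_subset
    by auto
qed

end
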